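(* Let $n$ be a positive integer, let $\mathcal F$ be an $\mathcal N$-saturated family of subsets of $[n]$, and let $\mathcal G$ be a component of $\mathcal F$. Let $B_1,\dots,B_l$ be the minimal elements and $A_1,\dots,A_k$ the maximal elements of $\mathcal G$. Let $M\in\mathcal F$ be such that $\bigcup_{i=1}^l B_i\subseteq M\subseteq\bigcap_{i=1}^k A_i$, and such that $M$ is maximal (with respect to inclusion) among the sets of $\mathcal F$ with this property. Then every $X\in\mathcal G$ is comparable to $M$.
   Context: The poset $\mathcal N$ has four elements $a,b,c,d$ with $a<c$, $b<c$, $b<d$ and no other comparabilities. A family $\mathcal Q$ of sets (ordered by inclusion) contains an induced copy of $\mathcal N$ if there are distinct sets in $\mathcal Q$ whose inclusion relations are exactly those of $a,b,c,d$ above. A family $\mathcal F$ of subsets of $[n]=\{1,\dots,n\}$ is $\mathcal N$-saturated if $\mathcal F$ contains no induced copy of $\mathcal N$, but for every $S\subseteq[n]$ with $S\notin\mathcal F$, the family $\mathcal F\cup\{S\}$ contains an induced copy of $\mathcal N$. A component of $\mathcal F$ is the vertex set of a connected component of the Hasse diagram (as a graph) of the poset $(\mathcal F\setminus\{\emptyset,[n]\},\subseteq)$; its minimal and maximal elements are taken with respect to inclusion within the component. *)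

theory Defs
  imports Main
begin

definition has_induced_N :: "'a set set \<Rightarrow> bool" where
  "has_induced_N Q \<longleftrightarrow> (\<exists>a\<in>Q. \<exists>b\<in>Q. \<exists>c\<in>Q. \<exists>d\<in>Q.
     distinct [a, b, c, d] \<and>
     a \<subset> c \<and> b \<subset> c \<and> b \<subset> d \<and>
     \<not> a \<subseteq> b \<and> \<not> b \<subseteq> a \<and>
     \<not> a \<subseteq> d \<and> \<not> d \<subseteq> a \<and>
     \<not> c \<subseteq> d \<and> \<not> d \<subseteq> c)"

definition N_saturated :: "nat \<Rightarrow> nat set set \<Rightarrow> bool" where
  "N_saturated n F \<longleftrightarrow> F \<subseteq> Pow {1..n} \<and> \<not> has_induced_N F \<and>
     (\<forall>S. S \<subseteq> {1..n} \<longrightarrow> S \<notin> F \<longrightarrow> has_induced_N (insert S F))"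

definition inner_part :: "nat \<Rightarrow> nat set set \<Rightarrow> nat set set" where
  "inner_part n F = F - {{}, {1..n}}"

definition hasse_edges :: "'a set set \<Rightarrow> ('a set \<times> 'a set) set" where
  "hasse_edges P = {(X, Y). X \<in> P \<and> Y \<in> P \<and> X \<subset> Y \<and>
                            \<not> (\<exists>Z\<in>P. X \<subset> Z \<and> Z \<subset> Y)}"

definition is_component :: "nat \<Rightarrow> nat set set \<Rightarrow> nat set set \<Rightarrow> bool" where
  "is_component n F G \<longleftrightarrow> (\<exists>X\<in>inner_part n F.
     G = {Y. (X, Y) \<in> (hasse_edges (inner_part n F) \<union> (hasse_edges (inner_part n F))\<inverse>)\<^sup>*})"

definition minimal_elems :: "'a set set \<Rightarrow> 'a set set" where
  "minimal_elems G = {B \<in> G. \<not> (\<exists>Y\<in>G. Y \<subset> B)}"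

definition maximal_elems :: "'a set set \<Rightarrow> 'a set set" where
  "maximal_elems G = {A \<in> G. \<not> (\<exists>Y\<in>G. A \<subset> Y)}"

end

theory Submission
  imports Defs
begin

text \<open>Let \<open>incomp\<close> be the set of members of \<open>G\<close> incomparable to \<open>M\<close>, and
  \<open>Mplus = M \<union> \<Union>incomp\<close>. A member \<open>X\<close> of \<open>incomp\<close> lies below every maximal element \<open>A\<close> of \<open>G\<close>:
  otherwise \<open>X\<close>, \<open>M\<close>, a maximal \<open>A\<^sub>0 \<supseteq> X\<close> and \<open>A\<close> form an \<open>N\<close>. So \<open>Mplus\<close> still lies between
  the minimal and the maximal elements of \<open>G\<close>. If \<open>Mplus\<close> were not in \<open>F\<close>, saturation would give
  an \<open>N\<close> in \<open>F\<close> plus \<open>Mplus\<close>; replacing \<open>Mplus\<close> by a suitable member of \<open>incomp\<close> (when it is one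
  of the two lower elements) or by a suitable maximal element of \<open>G\<close> (when it is one of the two
  upper elements) yields an \<open>N\<close> inside \<open>F\<close>. Hence \<open>Mplus \<in> F\<close>, maximality of \<open>M\<close> gives
  \<open>Mplus = M\<close>, and therefore \<open>incomp = {}\<close>.\<close>

definition N_shape :: "'a set \<Rightarrow> 'a set \<Rightarrow> 'a set \<Rightarrow> 'a set \<Rightarrow> bool" where
  "N_shape a b c d \<longleftrightarrow>
     a \<subset> c \<and> b \<subset> c \<and> b \<subset> d \<and>
     \<not> a \<subseteq> b \<and> \<not> b \<subseteq> a \<and> \<not> a \<subseteq> d \<and> \<not> d \<subseteq> a \<and> \<not> c \<subseteq> d \<and> \<not> d \<subseteq> c"

lemma N_shape_distinct: "N_shape a b c d \<Longrightarrow> distinct [a, b, c, d]"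
  unfolding N_shape_def by auto

lemma has_induced_N_iff:
  "has_induced_N Q \<longleftrightarrow> (\<exists>a\<in>Q. \<exists>b\<in>Q. \<exists>c\<in>Q. \<exists>d\<in>Q. N_shape a b c d)"
proof
  assume "has_induced_N Q"
  then show "\<exists>a\<in>Q. \<exists>b\<in>Q. \<exists>c\<in>Q. \<exists>d\<in>Q. N_shape a b c d"
    unfolding has_induced_N_def N_shape_def by meson
next
  assume "\<exists>a\<in>Q. \<exists>b\<in>Q. \<exists>c\<in>Q. \<exists>d\<in>Q. N_shape a b c d"
  then obtain a b c d where "a \<in> Q" "b \<in> Q" "c \<in> Q" "d \<in> Q" and N: "N_shape a b c d"
    by blast
  moreover note N_shape_distinct[OF N]
  ultimately show "has_induced_N Q"
    unfolding has_induced_N_def N_shape_def by meson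
qed

lemma N_saturated_memI:
  assumes "N_saturated n F" "S \<subseteq> {1..n}"
    and "\<And>b c d. b \<in> F \<Longrightarrow> c \<in> F \<Longrightarrow> d \<in> F \<Longrightarrow> \<not> N_shape S b c d"
    and "\<And>a c d. a \<in> F \<Longrightarrow> c \<in> F \<Longrightarrow> d \<in> F \<Longrightarrow> \<not> N_shape a S c d"
    and "\<And>a b d. a \<in> F \<Longrightarrow> b \<in> F \<Longrightarrow> d \<in> F \<Longrightarrow> \<not> N_shape a b S d"
    and "\<And>a b c. a \<in> F \<Longrightarrow> b \<in> F \<Longrightarrow> c \<in> F \<Longrightarrow> \<not> N_shape a b c S"
  shows "S \<in> F"
proof (rule ccontr)
  assume "S \<notin> F"
  with assms(1,2) have "has_induced_N (insert S F)"
    unfolding N_saturated_def by blast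
  then obtain a b c d where
    abcd: "a \<in> insert S F" "b \<in> insert S F" "c \<in> insert S F" "d \<in> insert S F"
    and N: "N_shape a b c d"
    unfolding has_induced_N_iff by blast
  have "\<not> has_induced_N F"
    using assms(1) unfolding N_saturated_def by blast
  then have "S \<in> {a, b, c, d}"
    using abcd N unfolding has_induced_N_iff by blast
  moreover have "distinct [a, b, c, d]"
    using N by (rule N_shape_distinct)
  ultimately show False
  proof (elim insertE emptyE)
    assume "S = a" "distinct [a, b, c, d]"
    then show False using assms(3)[of b c d] N abcd(2-4) by auto
  next
    assume "S = b" "distinct [a, b, c, d]"
    then show False using assms(4)[of a c d] N abcd(1,3,4) by auto
  next
    assume "S = c" "distinct [a, b, c, d]"
    then show False using assms(5)[of a b d] N abcd(1,2,4) by auto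
  next
    assume "S = d" "distinct [a, b, c, d]"
    then show False using assms(6)[of a b c] N abcd(1-3) by auto
  qed
qed

abbreviation hasse_graph :: "'a set set \<Rightarrow> ('a set \<times> 'a set) set" where
  "hasse_graph P \<equiv> hasse_edges P \<union> (hasse_edges P)\<inverse>"

lemma subset_imp_rtrancl_hasse_edges:
  "finite W \<Longrightarrow> Z \<in> P \<Longrightarrow> W \<in> P \<Longrightarrow> Z \<subseteq> W \<Longrightarrow> (Z, W) \<in> (hasse_edges P)\<^sup>*"
proof (induction "card (W - Z)" arbitrary: Z W rule: less_induct)
  case less
  show ?case
  proof (cases "\<exists>V\<in>P. Z \<subset> V \<and> V \<subset> W")
    case True
    then obtain V where V: "V \<in> P" "Z \<subset> V" "V \<subset> W" by blast
    have "card (V - Z) < card (W - Z)" "card (W - V) < card (W - Z)"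
      using V less.prems(1) by (auto intro!: psubset_card_mono)
    then have "(Z, V) \<in> (hasse_edges P)\<^sup>*" "(V, W) \<in> (hasse_edges P)\<^sup>*"
      using less V finite_subset[of V W] by auto
    then show ?thesis by (rule rtrancl_trans)
  next
    case False
    then have "Z = W \<or> (Z, W) \<in> hasse_edges P"
      using less.prems unfolding hasse_edges_def by blast
    then show ?thesis by blast
  qed
qed

lemma rtrancl_hasse_graph_closed:
  assumes "(X, Y) \<in> (hasse_graph P)\<^sup>*" "X \<in> P"
  shows "Y \<in> P"
  using assms by (induction rule: rtrancl_induct) (auto simp: hasse_edges_def)

lemma rtrancl_hasse_graph_if_comparable:
  assumes "finite W" "finite Z" "W \<in> P" "Z \<in> P" "Z \<subseteq> W \<or> W \<subseteq> Z"
  shows "(W, Z) \<in> (hasse_graph P)\<^sup>*"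
proof -
  have "(W, Z) \<in> (hasse_edges P)\<^sup>* \<or> (Z, W) \<in> (hasse_edges P)\<^sup>*"
    using assms subset_imp_rtrancl_hasse_edges by blast
  then show ?thesis
    by (metis in_rtrancl_UnI rtrancl_converseI)
qed

lemma maximal_elems_eq: "A \<in> maximal_elems G \<Longrightarrow> Y \<in> G \<Longrightarrow> A \<subseteq> Y \<Longrightarrow> Y = A"
  unfolding maximal_elems_def by blast

lemma finite_has_maximal_elem:
  assumes "finite G" "Z \<in> G"
  shows "\<exists>A\<in>maximal_elems G. Z \<subseteq> A"
proof -
  obtain A where "A \<in> G" "Z \<subseteq> A" "\<forall>Y\<in>G. A \<subseteq> Y \<longrightarrow> A = Y"
    using finite_has_maximal2[OF assms] by blast
  then show ?thesis
    unfolding maximal_elems_def by blast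
qed

locale saturated_component =
  fixes n :: nat and F G :: "nat set set" and M :: "nat set"
  assumes saturated: "N_saturated n F"
    and component: "is_component n F G"
    and M_in_F: "M \<in> F"
    and minimal_below_M: "\<Union> (minimal_elems G) \<subseteq> M"
    and M_below_maximal: "M \<subseteq> \<Inter> (maximal_elems G)"
    and M_maximal: "\<And>M'. M' \<in> F \<Longrightarrow> \<Union> (minimal_elems G) \<subseteq> M' \<Longrightarrow>
                       M' \<subseteq> \<Inter> (maximal_elems G) \<Longrightarrow> \<not> M \<subset> M'"
begin

definition incomp :: "nat set set" where
  "incomp = {X \<in> G. \<not> X \<subseteq> M \<and> \<not> M \<subseteq> X}"

definition Mplus :: "nat set" where
  "Mplus = M \<union> \<Union> incomp"

lemma incompD: "X \<in> incomp \<Longrightarrow> X \<in> G \<and> \<not> X \<subseteq> M \<and> \<not> M \<subseteq> X"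
  unfolding incomp_def by blast

lemma incomp_subset_Mplus: "X \<in> incomp \<Longrightarrow> X \<subseteq> Mplus"
  unfolding Mplus_def by blast

lemma M_subset_Mplus: "M \<subseteq> Mplus"
  unfolding Mplus_def by blast

lemma Mplus_eq_M_if_incomp_empty: "incomp = {} \<Longrightarrow> Mplus = M"
  unfolding Mplus_def by simp

lemma no_N_shape: "a \<in> F \<Longrightarrow> b \<in> F \<Longrightarrow> c \<in> F \<Longrightarrow> d \<in> F \<Longrightarrow> \<not> N_shape a b c d"
  using saturated unfolding N_saturated_def has_induced_N_iff by blast

lemma in_F_subset_ground: "Z \<in> F \<Longrightarrow> Z \<subseteq> {1..n}"
  using saturated unfolding N_saturated_def by blast

lemma component_subset: "G \<subseteq> inner_part n F"
  using component rtrancl_hasse_graph_closed unfolding is_component_def by blast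

lemma component_memD: "Z \<in> G \<Longrightarrow> Z \<in> F \<and> Z \<noteq> {} \<and> Z \<noteq> {1..n}"
  using component_subset unfolding inner_part_def by blast

lemma component_in_F: "Z \<in> G \<Longrightarrow> Z \<in> F"
  using component_memD by blast

lemma incomp_in_F: "X \<in> incomp \<Longrightarrow> X \<in> F"
  using incompD component_in_F by blast

lemma maximal_in_F: "A \<in> maximal_elems G \<Longrightarrow> A \<in> F"
  using component_in_F unfolding maximal_elems_def by blast

lemma component_nonempty: "G \<noteq> {}"
  using component unfolding is_component_def by blast

lemma finite_component: "finite G"
  using component_subset in_F_subset_ground
  by (intro finite_subset[of G "Pow {1..n}"]) (auto simp: inner_part_def)

lemma component_memI:
  assumes "Z \<in> F" "Z \<noteq> {}" "Z \<noteq> {1..n}" "W \<in> G" "Z \<subseteq> W \<or> W \<subseteq> Z"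
  shows "Z \<in> G"
proof -
  obtain X where G_eq: "G = {Y. (X, Y) \<in> (hasse_graph (inner_part n F))\<^sup>*}"
    using component unfolding is_component_def by blast
  have "W \<in> inner_part n F" "Z \<in> inner_part n F"
    using assms component_subset unfolding inner_part_def by auto
  then have "(W, Z) \<in> (hasse_graph (inner_part n F))\<^sup>*"
    using assms in_F_subset_ground finite_subset[of _ "{1..n}"]
    by (intro rtrancl_hasse_graph_if_comparable) (auto simp: inner_part_def)
  then show ?thesis
    using \<open>W \<in> G\<close> unfolding G_eq by (auto intro: rtrancl_trans)
qed

lemma component_mem_below: "Z \<in> F \<Longrightarrow> W \<in> G \<Longrightarrow> Z \<subseteq> W \<Longrightarrow> Z \<noteq> {} \<Longrightarrow> Z \<in> G"
  using component_memI[of Z W] component_memD[of W] in_F_subset_ground[of W] by blast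

lemma component_mem_above: "Z \<in> F \<Longrightarrow> W \<in> G \<Longrightarrow> W \<subseteq> Z \<Longrightarrow> Z \<noteq> {1..n} \<Longrightarrow> Z \<in> G"
  using component_memI[of Z W] component_memD[of W] by blast

lemma exists_maximal_above: "Z \<in> G \<Longrightarrow> \<exists>A\<in>maximal_elems G. Z \<subseteq> A"
  using finite_has_maximal_elem[OF finite_component] .

lemma incomp_below_maximal:
  assumes X: "X \<in> incomp" and A: "A \<in> maximal_elems G"
  shows "X \<subseteq> A"
proof (rule ccontr)
  assume "\<not> X \<subseteq> A"
  obtain A0 where A0: "A0 \<in> maximal_elems G" "X \<subseteq> A0"
    using incompD[OF X] exists_maximal_above by blast
  have "\<not> A \<subseteq> A0" "\<not> A0 \<subseteq> A"
    using A A0 \<open>\<not> X \<subseteq> A\<close> maximal_elems_eq[OF A] maximal_elems_eq[OF A0(1)]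
    unfolding maximal_elems_def by blast+
  then have "N_shape X M A0 A"
    using incompD[OF X] A A0 \<open>\<not> X \<subseteq> A\<close> M_below_maximal unfolding N_shape_def by blast
  then show False
    using no_N_shape[of X M A0 A] incomp_in_F[OF X] M_in_F maximal_in_F A A0(1) by blast
qed

lemma Mplus_below_maximal: "A \<in> maximal_elems G \<Longrightarrow> Mplus \<subseteq> A"
  using incomp_below_maximal M_below_maximal unfolding Mplus_def by blast

lemma Mplus_subset_ground: "Mplus \<subseteq> {1..n}"
  using component_nonempty exists_maximal_above Mplus_below_maximal maximal_in_F
    in_F_subset_ground
  by blast

lemma above_M_if_not_below_Mplus: "Z \<in> G \<Longrightarrow> \<not> Z \<subseteq> Mplus \<Longrightarrow> M \<subseteq> Z"
  unfolding Mplus_def incomp_def by blast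

lemma incomp_not_below_if_not_above_Mplus:
  "M \<subseteq> Z \<Longrightarrow> \<not> Mplus \<subseteq> Z \<Longrightarrow> \<exists>X\<in>incomp. \<not> X \<subseteq> Z"
  unfolding Mplus_def by blast

lemma maximal_not_above_if_above_M:
  assumes "Z \<in> F" "M \<subset> Z"
  shows "\<exists>A\<in>maximal_elems G. \<not> Z \<subseteq> A"
  using M_maximal[OF assms(1)] assms(2) minimal_below_M by blast

lemma below_Mplus_in_component:
  assumes "Z \<in> F" "Z \<subseteq> Mplus" "Z \<noteq> {}"
  shows "Z \<in> G"
proof -
  obtain A where "A \<in> maximal_elems G"
    using component_nonempty exists_maximal_above by blast
  then have "A \<in> G" "Z \<subseteq> A"
    using assms(2) Mplus_below_maximal unfolding maximal_elems_def by blast+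
  then show ?thesis
    using component_mem_below assms by blast
qed

lemma above_Mplus_in_component:
  assumes "Z \<in> F" "Mplus \<subseteq> Z" "Z \<noteq> {1..n}" "incomp \<noteq> {}"
  shows "Z \<in> G"
proof -
  obtain X where "X \<in> incomp"
    using assms(4) by blast
  then have "X \<in> G" "X \<subseteq> Z"
    using incompD incomp_subset_Mplus assms(2) by blast+
  then show ?thesis
    using component_mem_above assms by blast
qed

lemma no_N_shape_Mplus_a:
  assumes F: "b \<in> F" "c \<in> F" "d \<in> F"
  shows "\<not> N_shape Mplus b c d"
proof
  assume N: "N_shape Mplus b c d"
  show False
  proof (cases "incomp = {}")
    case True
    then show False
      using no_N_shape[OF M_in_F F] N Mplus_eq_M_if_incomp_empty by simp
  next
    case False
    have "c \<noteq> {1..n}"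
      using in_F_subset_ground[OF F(3)] N unfolding N_shape_def by blast
    then have "c \<in> G"
      using above_Mplus_in_component[OF F(2)] False N unfolding N_shape_def by blast
    then have "b \<in> G"
      using component_mem_below[OF F(1)] N unfolding N_shape_def by blast
    then have "M \<subseteq> b"
      using above_M_if_not_below_Mplus N unfolding N_shape_def by blast
    then obtain X where X: "X \<in> incomp" "\<not> X \<subseteq> d"
      using incomp_not_below_if_not_above_Mplus[of d] N unfolding N_shape_def by blast
    then have "N_shape X b c d"
      using N incomp_subset_Mplus[OF X(1)] incompD[OF X(1)] \<open>M \<subseteq> b\<close>
      unfolding N_shape_def by blast
    then show False
      using no_N_shape[of X b c d] incomp_in_F[OF X(1)] F by blast
  qed
qed

lemma no_N_shape_Mplus_b:
  assumes F: "a \<in> F" "c \<in> F" "d \<in> F"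
  shows "\<not> N_shape a Mplus c d"
proof
  assume N: "N_shape a Mplus c d"
  show False
  proof (cases "incomp = {}")
    case True
    then show False
      using no_N_shape[OF F(1) M_in_F F(2,3)] N Mplus_eq_M_if_incomp_empty by simp
  next
    case False
    have "c \<noteq> {1..n}"
      using in_F_subset_ground[OF F(3)] N unfolding N_shape_def by blast
    then have "c \<in> G"
      using above_Mplus_in_component[OF F(2)] False N unfolding N_shape_def by blast
    then have "a \<in> G"
      using component_mem_below[OF F(1)] N unfolding N_shape_def by blast
    then have "M \<subseteq> a"
      using above_M_if_not_below_Mplus N unfolding N_shape_def by blast
    then obtain X where X: "X \<in> incomp" "\<not> X \<subseteq> a"
      using incomp_not_below_if_not_above_Mplus[of a] N unfolding N_shape_def by blast
    then have "N_shape a X c d"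
      using N incomp_subset_Mplus[OF X(1)] incompD[OF X(1)] \<open>M \<subseteq> a\<close>
      unfolding N_shape_def by blast
    then show False
      using no_N_shape[of a X c d] incomp_in_F[OF X(1)] F by blast
  qed
qed

lemma no_N_shape_Mplus_c:
  assumes F: "a \<in> F" "b \<in> F" "d \<in> F"
  shows "\<not> N_shape a b Mplus d"
proof
  assume N: "N_shape a b Mplus d"
  then have "b \<in> G"
    using below_Mplus_in_component[OF F(2)] unfolding N_shape_def by blast
  moreover have "d \<noteq> {1..n}"
    using Mplus_subset_ground N unfolding N_shape_def by blast
  ultimately have "d \<in> G"
    using component_mem_above[OF F(3)] N unfolding N_shape_def by blast
  then have "M \<subset> d"
    using above_M_if_not_below_Mplus M_subset_Mplus N unfolding N_shape_def by blast
  then obtain A where A: "A \<in> maximal_elems G" "\<not> d \<subseteq> A"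
    using maximal_not_above_if_above_M[OF F(3)] by blast
  then have "N_shape a b A d"
    using N Mplus_below_maximal[OF A(1)] unfolding N_shape_def by blast
  then show False
    using no_N_shape[of a b A d] F maximal_in_F[OF A(1)] by blast
qed

lemma no_N_shape_Mplus_d:
  assumes F: "a \<in> F" "b \<in> F" "c \<in> F"
  shows "\<not> N_shape a b c Mplus"
proof
  assume N: "N_shape a b c Mplus"
  then have "b \<in> G"
    using below_Mplus_in_component[OF F(2)] unfolding N_shape_def by blast
  moreover have "c \<noteq> {1..n}"
    using Mplus_subset_ground N unfolding N_shape_def by blast
  ultimately have "c \<in> G"
    using component_mem_above[OF F(3)] N unfolding N_shape_def by blast
  then have "a \<in> G"
    using component_mem_below[OF F(1)] N unfolding N_shape_def by blast
  then have "M \<subset> a"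
    using above_M_if_not_below_Mplus M_subset_Mplus N unfolding N_shape_def by blast
  then obtain A where A: "A \<in> maximal_elems G" "\<not> a \<subseteq> A"
    using maximal_not_above_if_above_M[OF F(1)] by blast
  then have "N_shape a b c A"
    using N Mplus_below_maximal[OF A(1)] unfolding N_shape_def by blast
  then show False
    using no_N_shape[of a b c A] F maximal_in_F[OF A(1)] by blast
qed

lemma Mplus_in_F: "Mplus \<in> F"
  using saturated Mplus_subset_ground
    no_N_shape_Mplus_a no_N_shape_Mplus_b no_N_shape_Mplus_c no_N_shape_Mplus_d
  by (rule N_saturated_memI)

lemma comparable_to_M: "X \<in> G \<Longrightarrow> X \<subseteq> M \<or> M \<subseteq> X"
proof -
  have "\<Union> (minimal_elems G) \<subseteq> Mplus" "Mplus \<subseteq> \<Inter> (maximal_elems G)"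
    using minimal_below_M M_subset_Mplus Mplus_below_maximal by blast+
  then have "Mplus = M"
    using M_maximal[OF Mplus_in_F] M_subset_Mplus by blast
  then show "X \<in> G \<Longrightarrow> X \<subseteq> M \<or> M \<subseteq> X"
    using incomp_subset_Mplus unfolding incomp_def by blast
qed

end

theorem lemma2p6:
  fixes n :: nat and F G :: "nat set set" and M :: "nat set"
  assumes "n \<ge> 1"
    and "N_saturated n F"
    and "is_component n F G"
    and "M \<in> F"
    and "\<Union> (minimal_elems G) \<subseteq> M" and "M \<subseteq> \<Inter> (maximal_elems G)"
    and "\<And>M'. M' \<in> F \<Longrightarrow> \<Union> (minimal_elems G) \<subseteq> M' \<Longrightarrow>
              M' \<subseteq> \<Inter> (maximal_elems G) \<Longrightarrow> \<not> M \<subset> M'"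
  shows "\<forall>X\<in>G. X \<subseteq> M \<or> M \<subseteq> X"
proof -
  interpret saturated_component n F G M
    using assms(2-7) by unfold_locales
  show ?thesis using comparable_to_M by blast
qed

end
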